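(* Let $m\ge1$ and $n\ge1$ be integers, $m_1,\dots,m_n\ge1$ integers, $\alpha_0,\dots,\alpha_{m-1}$ nonnegative reals, $\gamma_1<\gamma_2<\cdots<\gamma_n$ nonnegative reals, and $\beta_k^{(j)}$ ($1\le j\le n$, $1\le k\le m_j$) positive reals. Let $$q(x)=x^m-\alpha_{m-1}x^{m-1}-\cdots-\alpha_1x-\alpha_0-\sum_{j=1}^n\sum_{k=1}^{m_j}\frac{\beta_k^{(j)}}{(x-\gamma_j)^k}.$$ Then $q$ has a real zero $R$ with $R>\gamma_n$. *)

theory Defs
  imports Complex_Main
begin

definition qfun :: "nat \<Rightarrow> (nat \<Rightarrow> real) \<Rightarrow> nat \<Rightarrow> (nat \<Rightarrow> nat) \<Rightarrow> (nat \<Rightarrow> real)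
    \<Rightarrow> (nat \<Rightarrow> nat \<Rightarrow> real) \<Rightarrow> real \<Rightarrow> real" where
  "qfun m \<alpha> n mm \<gamma> \<beta> x =
     x ^ m - (\<Sum>i<m. \<alpha> i * x ^ i)
     - (\<Sum>j=1..n. \<Sum>k=1..mm j. \<beta> j k / (x - \<gamma> j) ^ k)"

end

(*
  The function q is continuous on ]gamma_n, oo[. Just right of gamma_n the poles at
  gamma_1, ..., gamma_(n-1) are harmless (q without its last block of poles is continuous at
  gamma_n), while the last block is at least beta_1^(n) / (x - gamma_n), so q tends to -oo.
  For large x every pole term is bounded by |beta_k^(j)| and x^m dominates the lower terms,
  so q becomes positive. The intermediate value theorem gives the zero.
*)
theory Submission
  imports Defs
begin

lemma isCont_qfun:
  assumes "\<And>j. 1 \<le> j \<Longrightarrow> j \<le> n \<Longrightarrow> \<gamma> j < x"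
  shows "isCont (qfun m \<alpha> n mm \<gamma> \<beta>) x"
  unfolding qfun_def[abs_def] using assms by (intro continuous_intros) auto

lemma qfun_Suc:
  "qfun m \<alpha> (Suc n) mm \<gamma> \<beta> x =
     qfun m \<alpha> n mm \<gamma> \<beta> x - (\<Sum>k=1..mm (Suc n). \<beta> (Suc n) k / (x - \<gamma> (Suc n)) ^ k)"
  unfolding qfun_def by simp

lemma pole_sum_at_right_at_top:
  fixes a :: real and \<beta> :: "nat \<Rightarrow> real"
  assumes "1 \<le> K" and \<beta>_pos: "\<And>k. 1 \<le> k \<Longrightarrow> k \<le> K \<Longrightarrow> \<beta> k > 0"
  shows "LIM x at_right a. (\<Sum>k=1..K. \<beta> k / (x - a) ^ k) :> at_top"
proof -
  have "((\<lambda>x. x - a) \<longlongrightarrow> a - a) (at_right a)"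
    by (intro tendsto_intros)
  then have "((\<lambda>x. x - a) \<longlongrightarrow> 0) (at_right a)"
    by simp
  moreover have "\<forall>\<^sub>F x in at_right a. 0 < x - a"
    by (simp add: eventually_at_right_less)
  ultimately have "LIM x at_right a. inverse (x - a) :> at_top"
    by (rule filterlim_inverse_at_top)
  then have "LIM x at_right a. \<beta> 1 * inverse (x - a) :> at_top"
    using \<beta>_pos[of 1] \<open>1 \<le> K\<close> by (intro filterlim_tendsto_pos_mult_at_top[OF tendsto_const]) auto
  moreover have "\<forall>\<^sub>F x in at_right a. \<beta> 1 * inverse (x - a) \<le> (\<Sum>k=1..K. \<beta> k / (x - a) ^ k)"
    using eventually_at_right_less[of a]
  proof eventually_elim
    case (elim x)
    have "\<beta> 1 / (x - a) ^ 1 \<le> (\<Sum>k=1..K. \<beta> k / (x - a) ^ k)"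
      using \<open>1 \<le> K\<close> elim \<beta>_pos by (intro member_le_sum) (auto intro: less_imp_le)
    then show ?case by (simp add: divide_inverse)
  qed
  ultimately show ?thesis by (rule filterlim_at_top_mono)
qed

lemma qfun_at_right_at_bot:
  assumes "\<And>j. 1 \<le> j \<Longrightarrow> j < n \<Longrightarrow> \<gamma> j < \<gamma> n"
    and "1 \<le> n" and "1 \<le> mm n" and "\<And>k. 1 \<le> k \<Longrightarrow> k \<le> mm n \<Longrightarrow> \<beta> n k > 0"
  shows "LIM x at_right (\<gamma> n). qfun m \<alpha> n mm \<gamma> \<beta> x :> at_bot"
proof -
  obtain n' where n: "n = Suc n'" using \<open>1 \<le> n\<close> by (cases n) auto
  have "isCont (qfun m \<alpha> n' mm \<gamma> \<beta>) (\<gamma> n)"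
    using assms(1) n by (intro isCont_qfun) auto
  then have "(qfun m \<alpha> n' mm \<gamma> \<beta> \<longlongrightarrow> qfun m \<alpha> n' mm \<gamma> \<beta> (\<gamma> n)) (at_right (\<gamma> n))"
    by (simp add: isCont_def filterlim_at_split)
  moreover have "LIM x at_right (\<gamma> n). - (\<Sum>k=1..mm n. \<beta> n k / (x - \<gamma> n) ^ k) :> at_bot"
    using pole_sum_at_right_at_top[of "mm n" "\<beta> n" "\<gamma> n"] assms(3,4)
    by (simp add: filterlim_uminus_at_bot)
  ultimately have "LIM x at_right (\<gamma> n).
      qfun m \<alpha> n' mm \<gamma> \<beta> x + - (\<Sum>k=1..mm n. \<beta> n k / (x - \<gamma> n) ^ k) :> at_bot"
    by (rule filterlim_tendsto_add_at_bot_iff[THEN iffD2])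
  then show ?thesis by (simp add: n qfun_Suc)
qed

lemma power_minus_lower_terms_ge:
  fixes c :: real
  assumes "1 \<le> m" and "1 \<le> c" and A_le: "(\<Sum>i<m. \<bar>\<alpha> i\<bar>) \<le> c"
  shows "c - (\<Sum>i<m. \<bar>\<alpha> i\<bar>) \<le> c ^ m - (\<Sum>i<m. \<alpha> i * c ^ i)"
proof -
  define A where "A = (\<Sum>i<m. \<bar>\<alpha> i\<bar>)"
  have "(\<Sum>i<m. \<alpha> i * c ^ i) \<le> (\<Sum>i<m. \<bar>\<alpha> i\<bar> * c ^ (m - 1))"
  proof (rule sum_mono)
    fix i assume "i \<in> {..<m}"
    then have "c ^ i \<le> c ^ (m - 1)" using \<open>1 \<le> c\<close> by (intro power_increasing) auto
    then show "\<alpha> i * c ^ i \<le> \<bar>\<alpha> i\<bar> * c ^ (m - 1)"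
      using \<open>1 \<le> c\<close> by (intro mult_mono) auto
  qed
  also have "\<dots> = A * c ^ (m - 1)" by (simp add: A_def sum_distrib_right)
  finally have "c ^ (m - 1) * (c - A) \<le> c ^ m - (\<Sum>i<m. \<alpha> i * c ^ i)"
    using \<open>1 \<le> m\<close> by (cases m) (auto simp: algebra_simps)
  moreover have "c - A \<le> c ^ (m - 1) * (c - A)"
    using mult_right_mono[of 1 "c ^ (m - 1)" "c - A"] \<open>1 \<le> c\<close> A_le
    by (simp add: A_def)
  ultimately show ?thesis by (simp add: A_def)
qed

lemma pole_term_le:
  fixes x \<gamma> \<beta> :: real
  assumes "1 \<le> x - \<gamma>"
  shows "\<beta> / (x - \<gamma>) ^ k \<le> \<bar>\<beta>\<bar>"
proof -
  have "\<bar>\<beta> / (x - \<gamma>) ^ k\<bar> \<le> \<bar>\<beta>\<bar>"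
    using assms by (simp add: divide_le_eq mult_le_cancel_left1)
  then show ?thesis by linarith
qed

lemma qfun_eventually_pos:
  assumes "1 \<le> m" and "\<And>j. 1 \<le> j \<Longrightarrow> j \<le> n \<Longrightarrow> \<gamma> j \<le> g"
  shows "\<forall>\<^sub>F x in at_top. qfun m \<alpha> n mm \<gamma> \<beta> x > 0"
proof -
  define A where "A = (\<Sum>i<m. \<bar>\<alpha> i\<bar>)"
  define B where "B = (\<Sum>j=1..n. \<Sum>k=1..mm j. \<bar>\<beta> j k\<bar>)"
  have "0 \<le> B" by (simp add: B_def sum_nonneg)
  have "qfun m \<alpha> n mm \<gamma> \<beta> x > 0" if x: "x \<ge> max 1 (max (g + 1) (A + B + 1))" for x
  proof -
    have "(\<Sum>j=1..n. \<Sum>k=1..mm j. \<beta> j k / (x - \<gamma> j) ^ k) \<le> B"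
      unfolding B_def using x assms(2) by (intro sum_mono pole_term_le) force
    moreover have "x - A \<le> x ^ m - (\<Sum>i<m. \<alpha> i * x ^ i)"
      using power_minus_lower_terms_ge[OF \<open>1 \<le> m\<close>, of x \<alpha>] x \<open>0 \<le> B\<close> by (simp add: A_def)
    ultimately show ?thesis using x unfolding qfun_def by simp
  qed
  then show ?thesis by (rule eventually_at_top_linorderI)
qed

theorem lemma3p7:
  fixes m n :: nat and mm :: "nat \<Rightarrow> nat" and \<alpha> :: "nat \<Rightarrow> real"
    and \<gamma> :: "nat \<Rightarrow> real" and \<beta> :: "nat \<Rightarrow> nat \<Rightarrow> real"
  assumes "m \<ge> 1" and "n \<ge> 1"
    and "\<And>j. 1 \<le> j \<Longrightarrow> j \<le> n \<Longrightarrow> mm j \<ge> 1"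
    and "\<And>i. i < m \<Longrightarrow> \<alpha> i \<ge> 0"
    and "\<And>j. 1 \<le> j \<Longrightarrow> j \<le> n \<Longrightarrow> \<gamma> j \<ge> 0"
    and "\<And>j. 1 \<le> j \<Longrightarrow> j < n \<Longrightarrow> \<gamma> j < \<gamma> (Suc j)"
    and "\<And>j k. 1 \<le> j \<Longrightarrow> j \<le> n \<Longrightarrow> 1 \<le> k \<Longrightarrow> k \<le> mm j \<Longrightarrow> \<beta> j k > 0"
  shows "\<exists>R::real. R > \<gamma> n \<and> qfun m \<alpha> n mm \<gamma> \<beta> R = 0"
proof -
  let ?q = "qfun m \<alpha> n mm \<gamma> \<beta>"
  have \<gamma>_less: "\<gamma> j < \<gamma> n" if "1 \<le> j" "j < n" for j
    using lift_Suc_mono_less_ivl[of "{1..<n}" \<gamma> j n] assms(6) that by auto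
  then have \<gamma>_le: "\<gamma> j \<le> \<gamma> n" if "1 \<le> j" "j \<le> n" for j
    using that by (cases "j = n") (auto intro: less_imp_le)
  have "LIM x at_right (\<gamma> n). ?q x :> at_bot"
    using assms(2,3,7) by (intro qfun_at_right_at_bot \<gamma>_less) auto
  then have "\<forall>\<^sub>F x in at_right (\<gamma> n). ?q x < 0"
    by (simp add: filterlim_at_bot_dense)
  moreover have "\<forall>\<^sub>F x in at_right (\<gamma> n). x > \<gamma> n"
    by (simp add: eventually_at_right_less)
  ultimately have "\<forall>\<^sub>F x in at_right (\<gamma> n). x > \<gamma> n \<and> ?q x < 0"
    by eventually_elim simp
  then obtain a where a: "a > \<gamma> n" "?q a < 0"
    using eventually_happens'[OF trivial_limit_at_right_real] by blast
  have "\<forall>\<^sub>F x in at_top. ?q x > 0"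
    using \<open>m \<ge> 1\<close> \<gamma>_le by (rule qfun_eventually_pos)
  then obtain N where N: "\<And>x. x \<ge> N \<Longrightarrow> ?q x > 0"
    by (auto simp: eventually_at_top_linorder)
  define c where "c = max a N"
  have c: "c \<ge> a" "?q c > 0" using N by (auto simp: c_def)
  have "\<forall>x. a \<le> x \<and> x \<le> c \<longrightarrow> isCont ?q x"
    using a \<gamma>_le by (force intro!: isCont_qfun)
  then obtain R where "a \<le> R" "?q R = 0"
    using IVT[of ?q a 0 c] a c by auto
  then show ?thesis using a(1) by (intro exI[of _ R]) auto
qed

end
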